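(* Let $c>0$, $f_{\text{Nyq}}>0$, $B>0$, $M\ge 1$, and let $u(t)=\sum_{i=1}^{M}s_i(t)e^{j2\pi f_i t}$ be a signal in the class $\mathcal{M}_1$ described in the context, with common known angle of arrival $\theta\neq 90^\circ$. Consider a uniform linear array of $N$ sensors with spacing $d<\frac{c}{|\cos\theta|\,f_{\text{Nyq}}}$, with delays $\tau_n=\frac{dn}{c}\cos\theta$, steering matrix $\mathbf{A}=\mathbf{A}(\boldsymbol{f})\in\mathbb{C}^{N\times M}$ with entries $A_{n,i}=e^{j2\pi f_i\tau_n}$ ($n=1,\dots,N$, $i=1,\dots,M$), and measurements $\mathbf{x}[k]=\mathbf{A}(\boldsymbol{f})\mathbf{w}[k]$, $k\in\mathbb{Z}$, where $\boldsymbol{f}=(f_1,\dots,f_M)^T$ and $\mathbf{w}[k]\in\mathbb{C}^M$. If (c1) $N>2M-\dim(\mathrm{span}(\mathbf{w}))$ and (c2) $\dim(\mathrm{span}(\mathbf{w}))\ge 1$, then the equation $\mathbf{x}[k]=\mathbf{A}(\boldsymbol{f})\mathbf{w}[k]$, $k\in\mathbb{Z}$, has a unique solution $(\boldsymbol{f},\mathbf{w})$ (with carriers in $[-f_{\text{Nyq}}/2,f_{\text{Nyq}}/2]$, distinct, and up to a common relabeling of the indices $i$).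
   Context: Class $\mathcal{M}_1$: $u(t)=\sum_{i=1}^M s_i(t)e^{j2\pi f_i t}$ is complex valued with Fourier transform supported in $\mathcal{F}=[-f_{\text{Nyq}}/2,f_{\text{Nyq}}/2]$; each $s_i$ has Fourier transform $S_i$ supported in $[-B/2,B/2]$; the carriers satisfy $\min_{i\neq j}|f_i-f_j|>B$; all transmissions arrive at the array with the same known angle $\theta\neq 90^\circ$. Sampling system: the signal received at sensor $n$ is modeled (narrowband approximation) as $u_n(t)=\sum_{i=1}^M s_i(t)e^{j2\pi f_i(t+\tau_n)}$; each sensor multiplies $u_n(t)$ by the same periodic function $p(t)$ of period $T_p=1/f_p$, filters with an ideal low-pass filter of passband $[-f_s/2,f_s/2]$ and samples at rate $f_s=1/T_s$, yielding $x_n[k]$. Then $x_n[k]=\sum_{i=1}^M e^{j2\pi f_i\tau_n}w_i[k]$, where $w_i[k]=\tilde s_i(kT_s)$ and $\tilde s_i$ is the low-pass filtered version of $s_i(t)e^{j2\pi f_i t}p(t)$; $\mathbf{x}[k]=(x_1[k],\dots,x_N[k])^T$, $\mathbf{w}[k]=(w_1[k],\dots,w_M[k])^T$. $\dim(\mathrm{span}(\mathbf{w}))$ denotes the dimension of the linear span of $\{\mathbf{w}[k]:k\in\mathbb{Z}\}\subset\mathbb{C}^M$. *)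

theory Defs
  imports "HOL-Analysis.Analysis" "HOL-Library.Function_Algebras"
begin

definition tau :: "real \<Rightarrow> real \<Rightarrow> real \<Rightarrow> nat \<Rightarrow> real" where
  "tau c d theta n = d * real n / c * cos theta"

definition steer :: "real \<Rightarrow> real \<Rightarrow> real \<Rightarrow> ('m \<Rightarrow> real) \<Rightarrow> nat \<Rightarrow> 'm \<Rightarrow> complex" where
  "steer c d theta f n i = exp (\<i> * complex_of_real (2 * pi * f i * tau c d theta n))"

definition cscale :: "complex \<Rightarrow> ('m \<Rightarrow> complex) \<Rightarrow> ('m \<Rightarrow> complex)" where
  "cscale a v = (\<lambda>i. a * v i)"

lemma vector_space_cscale: "vector_space cscale"
  by unfold_locales (auto simp: cscale_def fun_eq_iff algebra_simps)

definition span_dim :: "(int \<Rightarrow> 'm::finite \<Rightarrow> complex) \<Rightarrow> nat" where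
  "span_dim w = vector_space.dim cscale (range w)"

end

theory Submission
  imports Defs
begin

(* With z_i = exp(j 2 pi f_i d cos(theta) / c) the steering matrix is the Vandermonde matrix
   A_{n,i} = z_i^n, and the bound on d makes f |-> z injective on the Nyquist band.  For a second
   solution (f', w'), the measurement equations say that w[k] and -w'[k], re-indexed by carrier
   frequency, combine to a vector on the union U of both carrier sets that lies in the kernel of
   an N x |U| Vandermonde matrix.  If |U| <= N that kernel is trivial, which forces the two
   solutions to agree up to relabelling, since every carrier of f' carries some nonzero w'.
   The case |U| > N is excluded by a dimension count: requiring the combination to vanish at
   the 2M - N coordinates outside N chosen carriers is a linear condition on span(w) that has a
   nonzero solution once dim span(w) > 2M - N, and Vandermonde on the N chosen carriers then
   shows that this nonzero element of span(w) vanishes. *)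

lemma exp_ii_2pi_inj_on:
  fixes k a b :: real
  assumes "k \<noteq> 0" and "\<bar>k\<bar> * (b - a) < 1"
  shows "inj_on (\<lambda>u. exp (\<i> * complex_of_real (2 * pi * u * k))) {a..b}"
proof (rule inj_onI)
  fix u v assume u: "u \<in> {a..b}" and v: "v \<in> {a..b}"
    and eq: "exp (\<i> * complex_of_real (2 * pi * u * k)) = exp (\<i> * complex_of_real (2 * pi * v * k))"
  have "exp (\<i> * complex_of_real (2 * pi * ((u - v) * k)))
      = exp (\<i> * complex_of_real (2 * pi * u * k)) / exp (\<i> * complex_of_real (2 * pi * v * k))"
    by (simp add: exp_diff[symmetric] algebra_simps)
  then have "exp (\<i> * complex_of_real (2 * pi * ((u - v) * k))) = 1"
    using eq by simp
  then obtain n :: int where n: "(u - v) * k = of_int n"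
    by (auto simp: exp_eq_1)
  have "\<bar>(u - v) * k\<bar> \<le> (b - a) * \<bar>k\<bar>"
    unfolding abs_mult using u v by (intro mult_right_mono) auto
  then have "n = 0" using n assms(2) by (simp add: mult.commute)
  then show "u = v" using n assms(1) by simp
qed

definition phase :: "real \<Rightarrow> real \<Rightarrow> real \<Rightarrow> real \<Rightarrow> complex" where
  "phase c d theta u = exp (\<i> * complex_of_real (2 * pi * u * (d / c * cos theta)))"

lemma steer_eq_phase_power: "steer c d theta f n i = phase c d theta (f i) ^ n"
proof -
  have "steer c d theta f n i
      = exp (of_nat n * (\<i> * complex_of_real (2 * pi * f i * (d / c * cos theta))))"
    unfolding steer_def tau_def by (simp add: algebra_simps)
  then show ?thesis
    unfolding phase_def by (simp only: exp_of_nat_mult)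
qed

lemma phase_nonzero: "phase c d theta u \<noteq> 0"
  by (simp add: phase_def)

lemma phase_inj_on:
  assumes "c > 0" "d > 0" "fNyq > 0" "cos theta \<noteq> 0" "d < c / (\<bar>cos theta\<bar> * fNyq)"
  shows "inj_on (phase c d theta) {- fNyq / 2 .. fNyq / 2}"
  unfolding phase_def
proof (rule exp_ii_2pi_inj_on)
  show "d / c * cos theta \<noteq> 0"
    using assms by simp
  have "d * (\<bar>cos theta\<bar> * fNyq) < c"
    using assms by (simp add: field_simps)
  then show "\<bar>d / c * cos theta\<bar> * (fNyq / 2 - - fNyq / 2) < 1"
    using assms by (simp add: abs_mult field_simps)
qed

lemma power_sums_eq_zero_imp_zero:
  fixes z :: "'b \<Rightarrow> 'a::idom"
  assumes "finite E" "card E \<le> N" "inj_on z E" "\<And>u. u \<in> E \<Longrightarrow> z u \<noteq> 0"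
    and "\<And>n. n \<in> {1..N} \<Longrightarrow> (\<Sum>u\<in>E. a u * z u ^ n) = 0"
  shows "\<forall>u\<in>E. a u = 0"
  using assms
proof (induction E arbitrary: a N rule: finite_induct)
  case empty
  then show ?case by simp
next
  case (insert u0 E)
  have "\<forall>u\<in>E. a u * (z u - z u0) = 0"
  proof (rule insert.IH[of "N - 1"])
    fix n assume n: "n \<in> {1..N - 1}"
    have e: "(\<Sum>u\<in>E. a u * z u ^ m) = - (a u0 * z u0 ^ m)" if "m \<in> {1..N}" for m
      using insert.prems(4)[OF that] insert.hyps by (simp add: add_eq_0_iff2 add.commute)
    have n_range: "n \<in> {1..N}" "Suc n \<in> {1..N}"
      using n by auto
    have "(\<Sum>u\<in>E. a u * (z u - z u0) * z u ^ n)
        = (\<Sum>u\<in>E. a u * z u ^ Suc n) - z u0 * (\<Sum>u\<in>E. a u * z u ^ n)"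
      by (simp add: sum_distrib_left sum_subtractf[symmetric] algebra_simps)
    also have "\<dots> = - (a u0 * z u0 ^ Suc n) - z u0 * - (a u0 * z u0 ^ n)"
      by (simp only: e[OF n_range(1)] e[OF n_range(2)])
    finally show "(\<Sum>u\<in>E. a u * (z u - z u0) * z u ^ n) = 0"
      by (simp add: algebra_simps)
  next
    show "card E \<le> N - 1" using insert.prems(1) insert.hyps by simp
    show "inj_on z E" using insert.prems(2) by simp
  qed (use insert.prems(3) in simp)
  moreover have "z u \<noteq> z u0" if "u \<in> E" for u
    using insert.prems(2) insert.hyps(2) that by (auto simp: inj_on_def)
  ultimately have "\<forall>u\<in>E. a u = 0"
    by simp
  moreover have "a u0 * z u0 + (\<Sum>u\<in>E. a u * z u) = 0"
    using insert.prems(4)[of 1] insert by simp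
  ultimately show ?case
    using insert.prems(3) by simp
qed

lemma homogeneous_system_nontrivial_solution:
  fixes g :: "'k \<Rightarrow> 'c \<Rightarrow> 'a::field"
  assumes "finite C" "finite K" "card C < card K"
  shows "\<exists>\<beta>. (\<exists>k\<in>K. \<beta> k \<noteq> 0) \<and> (\<forall>p\<in>C. (\<Sum>k\<in>K. \<beta> k * g k p) = 0)"
  using assms
proof (induction C arbitrary: K g rule: finite_induct)
  case empty
  then obtain k where "k \<in> K" by fastforce
  then show ?case by (intro exI[of _ "\<lambda>l. if l = k then 1 else 0"]) auto
next
  case (insert p C)
  show ?case
  proof (cases "\<exists>k0\<in>K. g k0 p \<noteq> 0")
    case False
    with insert show ?thesis by fastforce
  next
    case True
    then obtain k0 where k0: "k0 \<in> K" "g k0 p \<noteq> 0" by blast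
    let ?g = "\<lambda>k q. g k q - g k p / g k0 p * g k0 q"
    obtain \<beta> where \<beta>: "\<exists>k\<in>K - {k0}. \<beta> k \<noteq> 0" "\<forall>q\<in>C. (\<Sum>k\<in>K - {k0}. \<beta> k * ?g k q) = 0"
    proof -
      have "card C < card (K - {k0})"
        using insert.prems insert.hyps k0(1) by simp
      then show ?thesis
        using insert.IH[of "K - {k0}" ?g] insert.prems(1) that by blast
    qed
    define \<gamma> where "\<gamma> = \<beta>(k0 := - (\<Sum>k\<in>K - {k0}. \<beta> k * g k p) / g k0 p)"
    have split: "(\<Sum>k\<in>K. \<gamma> k * g k q) = \<gamma> k0 * g k0 q + (\<Sum>k\<in>K - {k0}. \<beta> k * g k q)" for q
      using k0(1) insert.prems(1) by (simp add: \<gamma>_def sum.remove)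
    have "(\<Sum>k\<in>K. \<gamma> k * g k q) = 0" if "q \<in> insert p C" for q
    proof (cases "q = p")
      case True
      then show ?thesis
        using k0(2) by (simp only: split) (simp add: \<gamma>_def)
    next
      case False
      then have "(\<Sum>k\<in>K - {k0}. \<beta> k * g k q) = g k0 q * (\<Sum>k\<in>K - {k0}. \<beta> k * g k p) / g k0 p"
        using \<beta>(2) that
        by (simp add: right_diff_distrib sum_subtractf sum_distrib_left sum_divide_distrib mult_ac)
      then show ?thesis
        by (simp only: split) (simp add: \<gamma>_def)
    qed
    moreover have "\<exists>k\<in>K. \<gamma> k \<noteq> 0"
      using \<beta>(1) by (auto simp: \<gamma>_def)
    ultimately show ?thesis by blast
  qed
qed

global_interpretation cs: vector_space cscale
  by (rule vector_space_cscale)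

lemma sum_apply: "(\<Sum>k\<in>K. g k) x = (\<Sum>k\<in>K. g k x)"
  by (induction K rule: infinite_finite_induct) auto

lemma span_cscale_units:
  "v \<in> cs.span (range (\<lambda>c. \<lambda>x::'a::finite. if x = c then 1 else 0))"
proof -
  have "v = (\<Sum>c\<in>UNIV. cscale (v c) (\<lambda>x. if x = c then 1 else 0))"
  proof
    fix x
    have "(\<Sum>c\<in>UNIV. cscale (v c) (\<lambda>x. if x = c then 1 else 0)) x
        = (\<Sum>c\<in>UNIV. if x = c then v c else 0)"
      unfolding sum_apply cscale_def by (rule sum.cong) auto
    then show "v x = (\<Sum>c\<in>UNIV. cscale (v c) (\<lambda>x. if x = c then 1 else 0)) x"
      by simp
  qed
  also have "\<dots> \<in> cs.span (range (\<lambda>c. \<lambda>x. if x = c then 1 else 0))"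
    by (intro cs.span_sum cs.span_scale cs.span_base) auto
  finally show ?thesis .
qed

lemma span_dim_le_card: "span_dim (w :: int \<Rightarrow> 'm::finite \<Rightarrow> complex) \<le> CARD('m)"
proof -
  have "span_dim w \<le> card (range (\<lambda>c. \<lambda>x::'m. if x = c then (1::complex) else 0))"
    unfolding span_dim_def by (rule cs.dim_le_card) (simp_all add: subset_eq span_cscale_units)
  also have "\<dots> \<le> CARD('m)"
    by (rule card_image_le) simp
  finally show ?thesis .
qed

lemma span_dim_independent_family:
  fixes w :: "int \<Rightarrow> 'm::finite \<Rightarrow> complex"
  obtains K where "finite K" "card K = span_dim w" "inj_on w K" "cs.independent (w ` K)"
proof -
  obtain B where B: "B \<subseteq> range w" "cs.independent B" "card B = span_dim w"
    unfolding span_dim_def by (rule cs.basis_exists)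
  obtain K where K: "inj_on w K" "B = w ` K"
    using B(1) unfolding subset_image_inj by blast
  have "finite B"
    using cs.independent_span_bound[of "range (\<lambda>c. \<lambda>x. if x = c then 1 else 0)" B] B(2)
    by (simp add: subset_eq span_cscale_units)
  with K have "finite K"
    by (simp add: finite_image_iff)
  moreover have "card K = span_dim w"
    using B(3) K card_image by metis
  ultimately show ?thesis
    using K B(2) by (intro that) simp_all
qed

lemma independent_family_coeffs_zero:
  fixes w :: "'k \<Rightarrow> 'm \<Rightarrow> complex"
  assumes "cs.independent (w ` K)" "inj_on w K" "finite K"
    and "\<And>i. (\<Sum>k\<in>K. \<beta> k * w k i) = 0" and "k \<in> K"
  shows "\<beta> k = 0"
proof (rule ccontr)
  assume "\<beta> k \<noteq> 0"
  let ?u = "\<lambda>v. \<beta> (the_inv_into K w v)"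
  have "(\<Sum>v\<in>w ` K. cscale (?u v) v) = (\<Sum>k\<in>K. cscale (\<beta> k) (w k))"
    using assms(2) by (simp add: sum.reindex the_inv_into_f_f)
  also have "\<dots> = 0"
    using assms(4) by (simp add: fun_eq_iff sum_apply cscale_def)
  finally have "(\<Sum>v\<in>w ` K. cscale (?u v) v) = 0" .
  moreover have "\<exists>v\<in>w ` K. ?u v \<noteq> 0"
    using \<open>\<beta> k \<noteq> 0\<close> the_inv_into_f_f[OF assms(2,5)] assms(5)
    by (intro bexI[of _ "w k"]) (simp, rule imageI)
  ultimately have "cs.dependent (w ` K)"
    unfolding cs.dependent_finite[OF finite_imageI[OF assms(3)]] by (intro exI[of _ ?u] conjI)
  with assms(1) show False by contradiction
qed

definition coeff_at :: "('i \<Rightarrow> 'a) \<Rightarrow> ('i \<Rightarrow> 'b::zero) \<Rightarrow> 'a \<Rightarrow> 'b" where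
  "coeff_at f y u = (if u \<in> range f then y (inv f u) else 0)"

lemma coeff_at_image [simp]: "inj f \<Longrightarrow> coeff_at f y (f i) = y i"
  by (simp add: coeff_at_def)

lemma coeff_at_outside [simp]: "u \<notin> range f \<Longrightarrow> coeff_at f y u = 0"
  by (simp add: coeff_at_def)

lemma sum_coeff_at:
  fixes f :: "'i::finite \<Rightarrow> 'a" and y :: "'i \<Rightarrow> 'b::comm_semiring_0"
  assumes "inj f" "finite U" "range f \<subseteq> U"
  shows "(\<Sum>i\<in>UNIV. g (f i) * y i) = (\<Sum>u\<in>U. coeff_at f y u * g u)"
proof -
  have "(\<Sum>i\<in>UNIV. g (f i) * y i) = (\<Sum>u\<in>range f. coeff_at f y u * g u)"
    using assms(1) by (simp add: sum.reindex mult.commute)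
  also have "\<dots> = (\<Sum>u\<in>U. coeff_at f y u * g u)"
    using assms(2,3) by (intro sum.mono_neutral_left) auto
  finally show ?thesis .
qed

lemma sum_weighted_swap:
  "(\<Sum>i\<in>I. g i * (\<Sum>k\<in>K. \<beta> k * y k i)) = (\<Sum>k\<in>K. \<beta> k * (\<Sum>i\<in>I. g i * y k i :: 'a::comm_semiring_0))"
  unfolding sum_distrib_left by (subst sum.swap) (simp add: mult_ac)

locale carrier_pair =
  fixes N :: nat and z :: "'a \<Rightarrow> complex" and f f' :: "'m::finite \<Rightarrow> 'a"
  assumes inj_f: "inj f" and inj_f': "inj f'"
    and inj_z: "inj_on z (range f \<union> range f')" and z_nonzero: "\<And>u. z u \<noteq> 0"
begin

definition same_measurements :: "('m \<Rightarrow> complex) \<Rightarrow> ('m \<Rightarrow> complex) \<Rightarrow> bool" where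
  "same_measurements y y' \<longleftrightarrow>
     (\<forall>n\<in>{1..N}. (\<Sum>i\<in>UNIV. z (f i) ^ n * y i) = (\<Sum>j\<in>UNIV. z (f' j) ^ n * y' j))"

lemma same_measurements_sum:
  assumes "\<And>k. k \<in> K \<Longrightarrow> same_measurements (w k) (w' k)"
  shows "same_measurements (\<lambda>i. \<Sum>k\<in>K. \<beta> k * w k i) (\<lambda>j. \<Sum>k\<in>K. \<beta> k * w' k j)"
  unfolding same_measurements_def
proof
  fix n assume "n \<in> {1..N}"
  have "(\<Sum>i\<in>UNIV. z (f i) ^ n * (\<Sum>k\<in>K. \<beta> k * w k i))
      = (\<Sum>k\<in>K. \<beta> k * (\<Sum>i\<in>UNIV. z (f i) ^ n * w k i))"
    by (rule sum_weighted_swap)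
  also have "\<dots> = (\<Sum>k\<in>K. \<beta> k * (\<Sum>j\<in>UNIV. z (f' j) ^ n * w' k j))"
    using assms \<open>n \<in> {1..N}\<close> unfolding same_measurements_def by (intro sum.cong) auto
  also have "\<dots> = (\<Sum>j\<in>UNIV. z (f' j) ^ n * (\<Sum>k\<in>K. \<beta> k * w' k j))"
    by (rule sum_weighted_swap[symmetric])
  finally show "(\<Sum>i\<in>UNIV. z (f i) ^ n * (\<Sum>k\<in>K. \<beta> k * w k i))
      = (\<Sum>j\<in>UNIV. z (f' j) ^ n * (\<Sum>k\<in>K. \<beta> k * w' k j))" .
qed

lemma coeff_at_agree:
  assumes "same_measurements y y'" "E \<subseteq> range f \<union> range f'" "card E \<le> N"
    and "\<And>u. u \<in> range f \<union> range f' - E \<Longrightarrow> coeff_at f y u = coeff_at f' y' u"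
    and "u \<in> range f \<union> range f'"
  shows "coeff_at f y u = coeff_at f' y' u"
proof -
  let ?U = "range f \<union> range f'"
  let ?a = "\<lambda>u. coeff_at f y u - coeff_at f' y' u"
  have sums: "(\<Sum>u\<in>E. ?a u * z u ^ n) = 0" if "n \<in> {1..N}" for n
  proof -
    have "(\<Sum>i\<in>UNIV. z (f i) ^ n * y i) = (\<Sum>u\<in>?U. coeff_at f y u * z u ^ n)"
      and "(\<Sum>j\<in>UNIV. z (f' j) ^ n * y' j) = (\<Sum>u\<in>?U. coeff_at f' y' u * z u ^ n)"
      by (rule sum_coeff_at[OF inj_f] sum_coeff_at[OF inj_f'], auto)+
    then have "(\<Sum>u\<in>?U. ?a u * z u ^ n) = 0"
      using assms(1) that by (simp add: same_measurements_def left_diff_distrib sum_subtractf)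
    moreover have "(\<Sum>u\<in>E. ?a u * z u ^ n) = (\<Sum>u\<in>?U. ?a u * z u ^ n)"
      using assms(2,4) by (intro sum.mono_neutral_left) auto
    ultimately show ?thesis by simp
  qed
  have "finite E"
    using assms(2) by (rule finite_subset) simp
  then have "\<forall>u\<in>E. ?a u = 0"
    using assms(3) inj_on_subset[OF inj_z assms(2)] z_nonzero sums
    by (rule power_sums_eq_zero_imp_zero)
  show ?thesis
  proof (cases "u \<in> E")
    case True
    with \<open>\<forall>u\<in>E. ?a u = 0\<close> show ?thesis by simp
  next
    case False
    with assms(4,5) show ?thesis by blast
  qed
qed


lemma same_measurements_vanishing:
  assumes "same_measurements y y'"
    and "range f - range f' \<subseteq> E" "E \<subseteq> range f \<union> range f'" "card E \<le> N"
    and "\<And>i. f i \<in> range f' \<Longrightarrow> y i = 0" and "\<And>j. f' j \<notin> E \<Longrightarrow> y' j = 0"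
  shows "y i = 0"
proof -
  have outside_E: "coeff_at f y u = coeff_at f' y' u" if u: "u \<in> range f \<union> range f' - E" for u
  proof -
    have "u \<in> range f'"
      using u assms(2) by blast
    then obtain j where j: "u = f' j" "f' j \<notin> E"
      using u by blast
    have "coeff_at f y u = 0"
    proof (cases "u \<in> range f")
      case True
      then obtain i where i: "u = f i" by blast
      with j(1) have "f i \<in> range f'" by (metis rangeI)
      then show ?thesis using assms(5) inj_f i by simp
    qed simp
    then show ?thesis
      using assms(6)[OF j(2)] inj_f' j(1) by simp
  qed
  have "f i \<in> range f \<union> range f'"
    by simp
  with assms(1,3,4) outside_E have "coeff_at f y (f i) = coeff_at f' y' (f i)"
    by (rule coeff_at_agree)
  then show ?thesis
    using assms(5) inj_f by (cases "f i \<in> range f'") auto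
qed

lemma card_coordinates:
  assumes "range f - range f' \<subseteq> E" "E \<subseteq> range f \<union> range f'"
  shows "card ({i. f i \<in> range f'} <+> {j. f' j \<notin> E}) + card E = 2 * CARD('m)"
proof -
  let ?U = "range f \<union> range f'"
  have "card {i. f i \<in> range f'} = card (range f \<inter> range f')"
  proof -
    have "f ` {i. f i \<in> range f'} = range f \<inter> range f'" by auto
    then show ?thesis using card_image[OF inj_on_subset[OF inj_f subset_UNIV]] by metis
  qed
  moreover have "card {j. f' j \<notin> E} = card (?U - E)"
  proof -
    have "f' ` {j. f' j \<notin> E} = ?U - E" using assms(1) by auto
    then show ?thesis using card_image[OF inj_on_subset[OF inj_f' subset_UNIV]] by metis
  qed
  moreover have "card (?U - E) + card E = card ?U"
    using assms(2) finite_subset[OF assms(2)] by (simp add: card_Diff_subset card_mono)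
  moreover have "card ?U + card (range f \<inter> range f') = 2 * CARD('m)"
    using card_Un_Int[of "range f" "range f'"] inj_f inj_f' by (simp add: card_image)
  ultimately show ?thesis
    by (simp add: card_Plus)
qed

lemma card_union_le:
  fixes w w' :: "int \<Rightarrow> 'm \<Rightarrow> complex"
  assumes same: "\<And>k. same_measurements (w k) (w' k)"
    and rank: "int N > 2 * int CARD('m) - int (span_dim w)"
  shows "card (range f \<union> range f') \<le> N"
proof (rule ccontr)
  let ?U = "range f \<union> range f'"
  assume "\<not> card ?U \<le> N"
  moreover have "card (range f - range f') \<le> N"
  proof -
    have "card (range f - range f') \<le> CARD('m)"
      using card_mono[of "range f" "range f - range f'"] inj_f by (simp add: card_image)
    then show ?thesis
      using rank span_dim_le_card[of w] by linarith
  qed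
  ultimately obtain E where E: "range f - range f' \<subseteq> E" "E \<subseteq> ?U" "card E = N"
    using exists_subset_between[of "range f - range f'" N ?U] by auto
  (* The coordinates of w at the common carriers and of w' at the carriers of f' outside E:
     a combination vanishing there is killed by the Vandermonde argument on E. *)
  define C where "C = {i. f i \<in> range f'} <+> {j. f' j \<notin> E}"
  have "card C < span_dim w"
    using card_coordinates[OF E(1,2)] E(3) rank unfolding C_def by linarith
  moreover obtain K where K: "finite K" "card K = span_dim w" "inj_on w K" "cs.independent (w ` K)"
    by (rule span_dim_independent_family)
  ultimately obtain \<beta> where \<beta>: "\<exists>k\<in>K. \<beta> k \<noteq> 0"
    "\<forall>p\<in>C. (\<Sum>k\<in>K. \<beta> k * case_sum (w k) (w' k) p) = 0"
    using homogeneous_system_nontrivial_solution[of C K "\<lambda>k. case_sum (w k) (w' k)"]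
    unfolding C_def by auto
  have sum_zero: "(\<Sum>k\<in>K. \<beta> k * w k i) = 0" for i
  proof (rule same_measurements_vanishing[OF same_measurements_sum E(1,2)])
    show "card E \<le> N" using E(3) by simp
    show "(\<Sum>k\<in>K. \<beta> k * w k i) = 0" if "f i \<in> range f'" for i
    proof -
      have "Inl i \<in> C" unfolding C_def using that by blast
      then show ?thesis using \<beta>(2) by fastforce
    qed
    show "(\<Sum>k\<in>K. \<beta> k * w' k j) = 0" if "f' j \<notin> E" for j
    proof -
      have "Inr j \<in> C" unfolding C_def using that by blast
      then show ?thesis using \<beta>(2) by fastforce
    qed
  qed (rule same)
  have "\<beta> k = 0" if "k \<in> K" for k
    using K(4,3,1) sum_zero that by (rule independent_family_coeffs_zero)
  with \<beta>(1) show False by blast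
qed

lemma coeff_at_agree_all:
  assumes "card (range f \<union> range f') \<le> N" "same_measurements y y'" "u \<in> range f \<union> range f'"
  shows "coeff_at f y u = coeff_at f' y' u"
  using assms(2) _ assms(1) _ assms(3) by (rule coeff_at_agree) auto

lemma eq_up_to_permutation:
  assumes "card (range f \<union> range f') \<le> N" and "\<And>k. same_measurements (w k) (w' k)"
    and "\<And>j. \<exists>k. w' k j \<noteq> 0"
  shows "\<exists>\<sigma>. bij \<sigma> \<and> f' = f \<circ> \<sigma> \<and> (\<forall>k. w' k = w k \<circ> \<sigma>)"
proof -
  have agree: "coeff_at f (w k) u = coeff_at f' (w' k) u" if "u \<in> range f \<union> range f'" for k u
    using assms(1,2) that by (rule coeff_at_agree_all)
  have "range f' \<subseteq> range f"
  proof
    fix u assume "u \<in> range f'"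
    then obtain j where j: "u = f' j" by blast
    show "u \<in> range f"
    proof (rule ccontr)
      assume "u \<notin> range f"
      then have "w' k j = 0" for k
        using agree[of u k] j inj_f' by simp
      with assms(3)[of j] show False by blast
    qed
  qed
  then have ranges: "range f' = range f"
    using inj_f inj_f' by (intro card_subset_eq) (simp_all add: card_image)
  define \<sigma> where "\<sigma> = inv f \<circ> f'"
  have f_\<sigma>: "f \<circ> \<sigma> = f'"
  proof
    fix j
    have "f' j \<in> range f" using ranges by blast
    then show "(f \<circ> \<sigma>) j = f' j" by (simp add: \<sigma>_def f_inv_into_f)
  qed
  have "inj \<sigma>"
    using inj_f' unfolding f_\<sigma>[symmetric] by (rule inj_on_imageI2)
  then have "bij \<sigma>"
    by (simp add: bij_def finite_UNIV_inj_surj)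
  moreover have "w' k = w k \<circ> \<sigma>" for k
  proof
    fix j
    have "w' k j = coeff_at f (w k) (f' j)"
      using agree[of "f' j" k] inj_f' by simp
    also have "\<dots> = w k (\<sigma> j)"
      using inj_f f_\<sigma>[symmetric] by simp
    finally show "w' k j = (w k \<circ> \<sigma>) j" by simp
  qed
  ultimately show ?thesis
    using f_\<sigma> by blast
qed


end

theorem theorem1:
  fixes c fNyq B d theta :: real
    and N :: nat
    and f :: "'m::finite \<Rightarrow> real"
    and w :: "int \<Rightarrow> 'm \<Rightarrow> complex"
    and x :: "int \<Rightarrow> nat \<Rightarrow> complex"
  assumes c_pos: "c > 0" and fNyq_pos: "fNyq > 0" and B_pos: "B > 0"
    and theta: "0 \<le> theta" "theta \<le> pi" "theta \<noteq> pi / 2"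
    and d_pos: "d > 0"
    and d_bound: "d < c / (\<bar>cos theta\<bar> * fNyq)"
    and f_range: "\<And>i. f i \<in> {- fNyq / 2 .. fNyq / 2}"
    and f_sep: "\<And>i j. i \<noteq> j \<Longrightarrow> \<bar>f i - f j\<bar> > B"
    and meas: "\<And>k n. n \<in> {1..N} \<Longrightarrow> x k n = (\<Sum>i\<in>UNIV. steer c d theta f n i * w k i)"
    and c1: "int N > 2 * int CARD('m) - int (span_dim w)"
    and c2: "span_dim w \<ge> 1"
  shows "\<forall>f' :: 'm \<Rightarrow> real. \<forall>w' :: int \<Rightarrow> 'm \<Rightarrow> complex.
           ((\<forall>i. f' i \<in> {- fNyq / 2 .. fNyq / 2}) \<and> inj f'
            \<and> (\<forall>i. \<exists>k. w' k i \<noteq> 0)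
            \<and> (\<forall>k. \<forall>n\<in>{1..N}. x k n = (\<Sum>i\<in>UNIV. steer c d theta f' n i * w' k i)))
           \<longrightarrow> (\<exists>\<sigma>. bij \<sigma> \<and> f' = f \<circ> \<sigma> \<and> (\<forall>k. w' k = w k \<circ> \<sigma>))"
proof (intro allI impI, elim conjE)
  fix f' :: "'m \<Rightarrow> real" and w' :: "int \<Rightarrow> 'm \<Rightarrow> complex"
  assume f'_range: "\<forall>i. f' i \<in> {- fNyq / 2 .. fNyq / 2}" and inj_f': "inj f'"
    and w'_nonzero: "\<forall>i. \<exists>k. w' k i \<noteq> 0"
    and meas': "\<forall>k. \<forall>n\<in>{1..N}. x k n = (\<Sum>i\<in>UNIV. steer c d theta f' n i * w' k i)"
  have inj_f: "inj f"
    using f_sep B_pos by (metis abs_zero diff_self injI not_less_iff_gr_or_eq)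
  have "cos theta \<noteq> 0"
    using theta arccos_0 arccos_unique by blast
  then have inj_phase: "inj_on (phase c d theta) (range f \<union> range f')"
    using phase_inj_on[OF c_pos d_pos fNyq_pos _ d_bound] f_range f'_range
    by (blast intro: inj_on_subset)
  interpret carrier_pair N "phase c d theta" f f'
    using inj_f inj_f' inj_phase phase_nonzero by unfold_locales
  have "same_measurements (w k) (w' k)" for k
    using meas meas' by (simp add: same_measurements_def steer_eq_phase_power)
  then show "\<exists>\<sigma>. bij \<sigma> \<and> f' = f \<circ> \<sigma> \<and> (\<forall>k. w' k = w k \<circ> \<sigma>)"
    using card_union_le c1 w'_nonzero by (intro eq_up_to_permutation) auto
qed

end
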